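(* Let $G_N=(V,E)$ be a connected, undirected, edge-weighted graph on $N$ nodes, let $r\ge1$, and let $p\in\{\mathrm{Bd},\mathrm{dB}\}$. Then there exists a node $v\in V$ such that $\rho^{p}_r(G_N,v)\ge \frac1N$.
   Context: Each edge $\{u,v\}$ has a positive weight $w(u,v)$ and $\deg(u)=\sum_v w(u,v)$. Each node is occupied by a resident (fitness 1) or a mutant (fitness $r\ge1$); $f(u)$ is the fitness at $u$, $F=\sum_u f(u)$. Moran Birth-death (Bd) process: each step a node $u$ is chosen with probability $f(u)/F$ and its offspring replaces a neighbor $v$ chosen with probability $w(u,v)/\deg(u)$. Moran death-Birth (dB) process: each step a uniformly random node $v$ dies and is replaced by the offspring of a neighbor $u$ chosen with probability $f(u)w(u,v)/\sum_{u'}f(u')w(u',v)$. $\rho^p_r(G_N,v)$ is the probability that mutants eventually occupy all nodes under process $p$ when initially only $v$ is a mutant. *)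

theory Defs
  imports Complex_Main
begin

datatype process = Bd | dB

definition fitness :: "real \<Rightarrow> 'v set \<Rightarrow> 'v \<Rightarrow> real" where
  "fitness r S u = (if u \<in> S then r else 1)"

definition wdeg :: "'v set \<Rightarrow> ('v \<Rightarrow> 'v \<Rightarrow> real) \<Rightarrow> 'v \<Rightarrow> real" where
  "wdeg V w u = (\<Sum>v\<in>V. w u v)"

text \<open>Probability that, in one step of process p from mutant set S, the offspring of u
  replaces the individual at v.\<close>
definition event_prob :: "process \<Rightarrow> real \<Rightarrow> 'v set \<Rightarrow> ('v \<Rightarrow> 'v \<Rightarrow> real) \<Rightarrow> 'v set \<Rightarrow> 'v \<Rightarrow> 'v \<Rightarrow> real" where
  "event_prob p r V w S u v =
     (case p of
        Bd \<Rightarrow> (fitness r S u / (\<Sum>x\<in>V. fitness r S x)) * (w u v / wdeg V w u)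
      | dB \<Rightarrow> (1 / real (card V)) * (fitness r S u * w u v / (\<Sum>x\<in>V. fitness r S x * w x v)))"

definition next_state :: "'v set \<Rightarrow> 'v \<Rightarrow> 'v \<Rightarrow> 'v set" where
  "next_state S u v = (if u \<in> S then insert v S else S - {v})"

fun reach_within :: "process \<Rightarrow> real \<Rightarrow> 'v set \<Rightarrow> ('v \<Rightarrow> 'v \<Rightarrow> real) \<Rightarrow> nat \<Rightarrow> 'v set \<Rightarrow> real" where
  "reach_within p r V w 0 S = (if S = V then 1 else 0)"
| "reach_within p r V w (Suc n) S =
     (if S = V then 1 else
        (\<Sum>u\<in>V. \<Sum>v\<in>V. event_prob p r V w S u v * reach_within p r V w n (next_state S u v)))"

definition fixation_prob :: "process \<Rightarrow> real \<Rightarrow> 'v set \<Rightarrow> ('v \<Rightarrow> 'v \<Rightarrow> real) \<Rightarrow> 'v \<Rightarrow> real" where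
  "fixation_prob p r V w v = (SUP n. reach_within p r V w n {v})"

text \<open>Connected undirected weighted graph on V: edges are pairs with positive weight.\<close>
definition weighted_graph :: "'v set \<Rightarrow> ('v \<Rightarrow> 'v \<Rightarrow> real) \<Rightarrow> bool" where
  "weighted_graph V w \<longleftrightarrow> finite V \<and> V \<noteq> {} \<and>
     (\<forall>u\<in>V. \<forall>v\<in>V. w u v = w v u \<and> w u v \<ge> 0) \<and> (\<forall>u\<in>V. w u u = 0)"

definition connected_wgraph :: "'v set \<Rightarrow> ('v \<Rightarrow> 'v \<Rightarrow> real) \<Rightarrow> bool" where
  "connected_wgraph V w \<longleftrightarrow>
     (\<forall>u\<in>V. \<forall>v\<in>V. (u, v) \<in> {(a, b). a \<in> V \<and> b \<in> V \<and> w a b > 0}\<^sup>*)"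

end

theory Submission
  imports Defs
begin

text \<open>Weight the nodes by \<open>\<pi>\<close>, proportional to \<open>1 / deg\<close> for Bd and to \<open>deg\<close> for dB,
  and let \<open>\<Phi> S = (\<Sum>x\<in>S. \<pi> x)\<close> for the mutant set \<open>S\<close>. For \<open>r \<ge> 1\<close> the expected one-step
  change of \<open>\<Phi>\<close> is nonnegative; for \<open>r = 1\<close> it vanishes, because the weighted flows across the
  cut between mutants and residents balance by the symmetry of \<open>w\<close>. On a connected graph \<open>\<Phi>\<close>
  changes with positive probability in every transient state, so there its one-step variance is at
  least some \<open>\<delta> > 0\<close>. As \<open>E[\<Phi>\<^sup>2] \<le> 1\<close> grows by \<open>\<delta>\<close> for every step spent in transient
  states, the probability of still being transient after \<open>n\<close> steps is at most \<open>1 / (n \<delta>)\<close>.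
  Hence \<open>\<Phi> {v}\<close> is at most the fixation probability from \<open>v\<close>, and \<open>\<Sum>v\<in>V. \<Phi> {v} = 1\<close> forces
  one of them to be at least \<open>1 / N\<close>.\<close>

lemma sum_if_cut:
  assumes "finite V" "S \<subseteq> V"
  shows "(\<Sum>u\<in>V. \<Sum>v\<in>V. if u \<in> S \<and> v \<notin> S then f u v else 0)
    = (\<Sum>u\<in>S. \<Sum>v\<in>V - S. f u v :: 'a :: comm_monoid_add)"
proof -
  have "(\<Sum>u\<in>V. \<Sum>v\<in>V. if u \<in> S \<and> v \<notin> S then f u v else 0)
      = (\<Sum>u\<in>V. if u \<in> S then (\<Sum>v\<in>V - S. f u v) else 0)"
    using assms(1) by (intro sum.cong refl) (auto simp: sum.inter_restrict Diff_eq)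
  also have "\<dots> = (\<Sum>u\<in>S. \<Sum>v\<in>V - S. f u v)"
    using assms by (simp add: sum.If_cases Int_absorb1 Int_absorb2)
  finally show ?thesis .
qed

lemma sum_swap_symmetric:
  assumes "\<And>u v. u \<in> A \<Longrightarrow> v \<in> B \<Longrightarrow> f u v = f v u"
  shows "(\<Sum>u\<in>A. \<Sum>v\<in>B. f u v) = (\<Sum>u\<in>B. \<Sum>v\<in>A. f u v)"
  by (subst sum.swap) (use assms in \<open>auto intro!: sum.cong\<close>)

lemma sum_next_state_diff:
  assumes "finite S"
  shows "sum (\<pi> :: _ \<Rightarrow> 'a :: ab_group_add) (next_state S u v) - sum \<pi> S
    = (if u \<in> S \<and> v \<notin> S then \<pi> v else 0) - (if u \<notin> S \<and> v \<in> S then \<pi> v else 0)"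
  using assms by (cases "u \<in> S"; cases "v \<in> S") (simp_all add: next_state_def sum_diff1 insert_absorb)

locale moran_graph =
  fixes p :: process and r :: real and V :: "'v set" and w :: "'v \<Rightarrow> 'v \<Rightarrow> real"
  assumes weighted_graph: "weighted_graph V w"
    and connected: "connected_wgraph V w"
    and r_ge_1: "1 \<le> r"
    and two_le_card: "2 \<le> card V"
begin

lemma finite_V: "finite V"
  using weighted_graph by (simp add: weighted_graph_def)

lemma V_nonempty: "V \<noteq> {}"
  using two_le_card by auto

lemma w_sym: "u \<in> V \<Longrightarrow> v \<in> V \<Longrightarrow> w u v = w v u"
  using weighted_graph by (simp add: weighted_graph_def)

lemma w_nonneg: "u \<in> V \<Longrightarrow> v \<in> V \<Longrightarrow> 0 \<le> w u v"
  using weighted_graph by (simp add: weighted_graph_def)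

lemma edge_path: "u \<in> V \<Longrightarrow> v \<in> V \<Longrightarrow> (u, v) \<in> {(a, b). a \<in> V \<and> b \<in> V \<and> w a b > 0}\<^sup>*"
  using connected by (simp add: connected_wgraph_def)

lemma exists_crossing_edge:
  assumes "S \<subseteq> V" "a \<in> S" "b \<in> V" "b \<notin> S"
  shows "\<exists>u\<in>S. \<exists>v\<in>V - S. 0 < w u v"
proof -
  have "(a, b) \<in> {(a, b). a \<in> V \<and> b \<in> V \<and> w a b > 0}\<^sup>*"
    using edge_path assms by auto
  then have "b \<notin> S \<longrightarrow> (\<exists>u\<in>S. \<exists>v\<in>V - S. 0 < w u v)"
  proof (induction rule: rtrancl_induct)
    case base
    then show ?case using assms by simp
  next
    case (step y z)
    then show ?case by (cases "y \<in> S") auto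
  qed
  then show ?thesis using assms by simp
qed

lemma exists_edge:
  assumes "u \<in> V"
  shows "\<exists>v\<in>V. 0 < w u v"
proof -
  have "\<not> V \<subseteq> {u}"
    using two_le_card card_mono[of "{u}" V] by auto
  then obtain b where "b \<in> V" "b \<noteq> u" by blast
  then obtain x y where "x \<in> {u}" "y \<in> V - {u}" "0 < w x y"
    using exists_crossing_edge[of "{u}" u b] assms by auto
  then show ?thesis using assms by auto
qed

lemma fitness_pos: "0 < fitness r (S :: 'v set) x"
  using r_ge_1 by (simp add: fitness_def)

lemma total_fitness_pos: "0 < (\<Sum>x\<in>V. fitness r S x)"
  by (rule sum_pos[OF finite_V V_nonempty fitness_pos])

lemma wdeg_pos:
  assumes "u \<in> V"
  shows "0 < wdeg V w u"
proof -
  obtain v where "v \<in> V" "0 < w u v" using exists_edge assms by blast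
  then show ?thesis
    unfolding wdeg_def using finite_V w_nonneg assms by (intro sum_pos2[of V v]) auto
qed

lemma weighted_fitness_pos:
  assumes "v \<in> V"
  shows "0 < (\<Sum>x\<in>V. fitness r S x * w x v)"
proof -
  obtain u where u: "u \<in> V" "0 < w v u" using exists_edge assms by blast
  show ?thesis
  proof (rule sum_pos2[OF finite_V u(1)])
    show "0 < fitness r S u * w u v"
      using w_sym[OF u(1) assms] u(2) fitness_pos[of S u] by simp
    show "0 \<le> fitness r S x * w x v" if "x \<in> V" for x
      using fitness_pos[of S x] w_nonneg[OF that assms] by simp
  qed
qed

abbreviation ep :: "'v set \<Rightarrow> 'v \<Rightarrow> 'v \<Rightarrow> real" where
  "ep S u v \<equiv> event_prob p r V w S u v"

lemma event_prob_nonneg: "u \<in> V \<Longrightarrow> v \<in> V \<Longrightarrow> 0 \<le> ep S u v"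
  using total_fitness_pos[of S] wdeg_pos[of u] weighted_fitness_pos[of v S] fitness_pos[of S u]
    w_nonneg[of u v]
  by (cases p) (auto simp: event_prob_def intro!: mult_nonneg_nonneg divide_nonneg_pos)

lemma event_prob_pos: "u \<in> V \<Longrightarrow> v \<in> V \<Longrightarrow> 0 < w u v \<Longrightarrow> 0 < ep S u v"
  using total_fitness_pos[of S] wdeg_pos[of u] weighted_fitness_pos[of v S] fitness_pos[of S u]
    two_le_card
  by (cases p) (auto simp: event_prob_def intro!: mult_pos_pos divide_pos_pos)

lemma event_prob_sum: "(\<Sum>u\<in>V. \<Sum>v\<in>V. ep S u v) = 1"
proof (cases p)
  case Bd
  have "(\<Sum>v\<in>V. ep S u v) = fitness r S u / (\<Sum>x\<in>V. fitness r S x)" if "u \<in> V" for u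
  proof -
    have "(\<Sum>v\<in>V. ep S u v)
        = fitness r S u / (\<Sum>x\<in>V. fitness r S x) * ((\<Sum>v\<in>V. w u v) / wdeg V w u)"
      using Bd by (simp add: event_prob_def sum_distrib_left sum_divide_distrib)
    then show ?thesis using wdeg_pos[OF that] by (simp add: wdeg_def)
  qed
  then have "(\<Sum>u\<in>V. \<Sum>v\<in>V. ep S u v) = (\<Sum>u\<in>V. fitness r S u / (\<Sum>x\<in>V. fitness r S x))"
    by (intro sum.cong) auto
  also have "\<dots> = 1"
    using total_fitness_pos[of S] by (simp add: sum_divide_distrib[symmetric])
  finally show ?thesis .
next
  case dB
  have "(\<Sum>u\<in>V. ep S u v) = 1 / real (card V)" if "v \<in> V" for v
    using dB weighted_fitness_pos[OF that, of S]
    by (simp add: event_prob_def sum_distrib_left[symmetric] sum_divide_distrib[symmetric])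
  then have "(\<Sum>v\<in>V. \<Sum>u\<in>V. ep S u v) = 1"
    using two_le_card by simp
  then show ?thesis
    by (subst sum.swap)
qed

lemma next_state_subset: "S \<subseteq> V \<Longrightarrow> v \<in> V \<Longrightarrow> next_state S u v \<subseteq> V"
  by (auto simp: next_state_def)

definition expect_step :: "('v set \<Rightarrow> real) \<Rightarrow> 'v set \<Rightarrow> real" where
  "expect_step g S =
     (if S = V then g V else (\<Sum>u\<in>V. \<Sum>v\<in>V. ep S u v * g (next_state S u v)))"

definition drift :: "('v set \<Rightarrow> real) \<Rightarrow> 'v set \<Rightarrow> real" where
  "drift g S = (\<Sum>u\<in>V. \<Sum>v\<in>V. ep S u v * (g (next_state S u v) - g S))"

definition step_variance :: "('v set \<Rightarrow> real) \<Rightarrow> 'v set \<Rightarrow> real" where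
  "step_variance g S = (\<Sum>u\<in>V. \<Sum>v\<in>V. ep S u v * (g (next_state S u v) - g S)\<^sup>2)"

lemma expect_step_eq_add_drift:
  assumes "S \<noteq> V"
  shows "expect_step g S = g S + drift g S"
proof -
  have "drift g S = (\<Sum>u\<in>V. \<Sum>v\<in>V. ep S u v * g (next_state S u v))
      - (\<Sum>u\<in>V. \<Sum>v\<in>V. ep S u v) * g S"
    by (simp add: drift_def right_diff_distrib sum_subtractf sum_distrib_right)
  then show ?thesis
    using assms by (simp add: expect_step_def event_prob_sum)
qed

lemma drift_empty: "drift g {} = 0"
  by (simp add: drift_def next_state_def)

lemma expect_step_empty: "expect_step g {} = g {}"
  using V_nonempty by (simp add: expect_step_eq_add_drift drift_empty)

lemma drift_square: "drift (\<lambda>S. (g S)\<^sup>2) S = step_variance g S + 2 * g S * drift g S"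
proof -
  have "drift (\<lambda>S. (g S)\<^sup>2) S = (\<Sum>u\<in>V. \<Sum>v\<in>V. ep S u v * (g (next_state S u v) - g S)\<^sup>2
      + 2 * g S * (ep S u v * (g (next_state S u v) - g S)))"
    unfolding drift_def by (intro sum.cong refl) (simp add: power2_eq_square algebra_simps)
  then show ?thesis
    by (simp add: drift_def step_variance_def sum.distrib sum_distrib_left)
qed

lemma expect_step_mono:
  assumes "\<And>S. S \<subseteq> V \<Longrightarrow> g S \<le> h S" "S \<subseteq> V"
  shows "expect_step g S \<le> expect_step h S"
proof -
  have "ep S u v * g (next_state S u v) \<le> ep S u v * h (next_state S u v)"
    if "u \<in> V" "v \<in> V" for u v
    using assms next_state_subset that event_prob_nonneg by (simp add: mult_left_mono)
  then show ?thesis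
    using assms by (simp add: expect_step_def sum_mono)
qed

lemma expect_step_add: "expect_step (\<lambda>S. g S + h S) S = expect_step g S + expect_step h S"
  by (simp add: expect_step_def distrib_left sum.distrib)

lemma expect_step_cmult: "expect_step (\<lambda>S. c * g S) S = c * expect_step g S"
  by (simp add: expect_step_def sum_distrib_left mult_ac)

lemma expect_step_const: "expect_step (\<lambda>S. c) S = c"
  using event_prob_sum[of S] by (simp add: expect_step_def flip: sum_distrib_right)

lemma expect_step_sum:
  "finite A \<Longrightarrow> expect_step (\<lambda>S. \<Sum>k\<in>A. f k S) S = (\<Sum>k\<in>A. expect_step (f k) S)"
  by (induction A rule: finite_induct) (simp_all add: expect_step_const expect_step_add)

lemma funpow_expect_step_mono:
  "(\<And>S. S \<subseteq> V \<Longrightarrow> g S \<le> h S) \<Longrightarrow> S \<subseteq> V \<Longrightarrow> (expect_step ^^ n) g S \<le> (expect_step ^^ n) h S"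
  by (induction n arbitrary: S) (simp_all add: expect_step_mono)

lemma funpow_expect_step_add:
  "(expect_step ^^ n) (\<lambda>S. g S + h S) = (\<lambda>S. (expect_step ^^ n) g S + (expect_step ^^ n) h S)"
  by (induction n) (simp_all add: expect_step_add)

lemma funpow_expect_step_const: "(expect_step ^^ n) (\<lambda>S. c) = (\<lambda>S. c)"
  by (induction n) (simp_all add: expect_step_const)

lemma funpow_expect_step_le_1:
  "(\<And>S. S \<subseteq> V \<Longrightarrow> g S \<le> 1) \<Longrightarrow> S \<subseteq> V \<Longrightarrow> (expect_step ^^ n) g S \<le> 1"
  using funpow_expect_step_mono[of g "\<lambda>S. 1" S n] by (simp add: funpow_expect_step_const)

lemma reach_within_eq_funpow:
  "reach_within p r V w n S = (expect_step ^^ n) (\<lambda>S. of_bool (S = V)) S"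
proof (induction n arbitrary: S)
  case 0
  then show ?case by simp
next
  case (Suc n)
  have "reach_within p r V w n V = 1" by (cases n) auto
  then show ?case using Suc by (simp add: expect_step_def)
qed

lemma drift_potential:
  assumes "S \<subseteq> V"
  shows "drift (sum \<pi>) S
    = (\<Sum>u\<in>S. \<Sum>v\<in>V - S. ep S u v * \<pi> v) - (\<Sum>u\<in>V - S. \<Sum>v\<in>S. ep S u v * \<pi> v)"
proof -
  have "finite S" using assms finite_V finite_subset by blast
  then have "drift (sum \<pi>) S = (\<Sum>u\<in>V. \<Sum>v\<in>V.
        (if u \<in> S \<and> v \<notin> S then ep S u v * \<pi> v else 0)
      - (if u \<in> V - S \<and> v \<notin> V - S then ep S u v * \<pi> v else 0))"
    unfolding drift_def by (intro sum.cong refl) (auto simp: sum_next_state_diff)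
  also have "\<dots> = (\<Sum>u\<in>S. \<Sum>v\<in>V - S. ep S u v * \<pi> v) - (\<Sum>u\<in>V - S. \<Sum>v\<in>V - (V - S). ep S u v * \<pi> v)"
    by (simp only: sum_subtractf sum_if_cut[OF finite_V assms] sum_if_cut[OF finite_V Diff_subset])
  finally show ?thesis
    using assms by (simp add: double_diff)
qed

end

locale potential_submartingale = moran_graph p r V w for p r and V :: "'v set" and w +
  fixes \<pi> :: "'v \<Rightarrow> real"
  assumes weight_pos: "\<And>x. x \<in> V \<Longrightarrow> 0 < \<pi> x"
    and weight_sum: "sum \<pi> V = 1"
    and drift_nonneg: "\<And>S. S \<subseteq> V \<Longrightarrow> S \<noteq> {} \<Longrightarrow> S \<noteq> V \<Longrightarrow> 0 \<le> drift (sum \<pi>) S"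
begin

abbreviation \<Phi> :: "'v set \<Rightarrow> real" where
  "\<Phi> \<equiv> sum \<pi>"

definition transient :: "'v set \<Rightarrow> bool" where
  "transient S \<longleftrightarrow> S \<subseteq> V \<and> S \<noteq> {} \<and> S \<noteq> V"

abbreviation transient_ind :: "'v set \<Rightarrow> real" where
  "transient_ind S \<equiv> of_bool (transient S)"

definition min_variance :: real where
  "min_variance = Min (step_variance \<Phi> ` Collect transient)"

lemma potential_nonneg: "S \<subseteq> V \<Longrightarrow> 0 \<le> \<Phi> S"
  using weight_pos by (intro sum_nonneg) (auto intro: less_imp_le)

lemma potential_le_1: "S \<subseteq> V \<Longrightarrow> \<Phi> S \<le> 1"
  using weight_pos weight_sum finite_V by (metis sum_mono2 Diff_iff less_imp_le)

lemma potential_le_expect_step: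
  assumes "S \<subseteq> V"
  shows "\<Phi> S \<le> expect_step \<Phi> S"
proof (cases "S = V")
  case False
  then have "0 \<le> drift \<Phi> S"
    using assms drift_nonneg by (cases "S = {}") (simp_all add: drift_empty)
  then show ?thesis using False by (simp add: expect_step_eq_add_drift)
qed (simp add: expect_step_def)

lemma step_variance_pos:
  assumes "transient S"
  shows "0 < step_variance \<Phi> S"
proof -
  have S: "S \<subseteq> V" "S \<noteq> {}" "S \<noteq> V" using assms by (auto simp: transient_def)
  then obtain u v where uv: "u \<in> S" "v \<in> V - S" "0 < w u v"
    using exists_crossing_edge by blast
  have "finite S" using S finite_V finite_subset by blast
  then have "\<Phi> (next_state S u v) - \<Phi> S = \<pi> v"
    using uv by (simp add: sum_next_state_diff)
  then have "0 < ep S u v * (\<Phi> (next_state S u v) - \<Phi> S)\<^sup>2"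
    using uv S weight_pos[of v] event_prob_pos[of u v S] by auto
  also have "\<dots> \<le> (\<Sum>v'\<in>V. ep S u v' * (\<Phi> (next_state S u v') - \<Phi> S)\<^sup>2)"
    using uv S finite_V event_prob_nonneg by (intro member_le_sum) auto
  also have "\<dots> \<le> step_variance \<Phi> S"
    unfolding step_variance_def using uv S finite_V event_prob_nonneg
    by (intro member_le_sum sum_nonneg) auto
  finally show ?thesis .
qed

lemma finite_transient: "finite (Collect transient)"
  using finite_V by (rule rev_finite_subset[OF finite_Pow_iff[THEN iffD2]]) (auto simp: transient_def)

lemma exists_transient: "\<exists>S. transient S"
proof -
  obtain a where "a \<in> V" using V_nonempty by auto
  moreover have "{a} \<noteq> V" using two_le_card by auto
  ultimately show ?thesis by (auto simp: transient_def)
qed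

lemma min_variance_pos: "0 < min_variance"
  using finite_transient exists_transient step_variance_pos
  by (simp add: min_variance_def Min_gr_iff)

lemma min_variance_le: "transient S \<Longrightarrow> min_variance \<le> step_variance \<Phi> S"
  using finite_transient by (simp add: min_variance_def)

lemma potential_sq_le_expect_step:
  assumes "S \<subseteq> V"
  shows "(\<Phi> S)\<^sup>2 + min_variance * transient_ind S \<le> expect_step (\<lambda>S. (\<Phi> S)\<^sup>2) S"
proof (cases "transient S")
  case True
  then have "S \<noteq> V" "S \<noteq> {}" by (auto simp: transient_def)
  then have "0 \<le> 2 * \<Phi> S * drift \<Phi> S"
    using assms drift_nonneg potential_nonneg by simp
  then show ?thesis
    using True \<open>S \<noteq> V\<close> min_variance_le[OF True]
    by (simp add: expect_step_eq_add_drift drift_square)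
next
  case False
  then consider "S = V" | "S = {}" using assms by (auto simp: transient_def)
  then show ?thesis
    by cases (simp add: expect_step_def transient_def, simp add: expect_step_empty transient_def)
qed

lemma expect_step_transient_ind_le:
  assumes "S \<subseteq> V"
  shows "expect_step transient_ind S \<le> transient_ind S"
proof (cases "transient S")
  case True
  have "expect_step transient_ind S \<le> expect_step (\<lambda>S. 1) S"
    using assms by (intro expect_step_mono) auto
  then show ?thesis using True by (simp add: expect_step_const)
next
  case False
  then consider "S = V" | "S = {}" using assms by (auto simp: transient_def)
  then show ?thesis
    by cases (simp add: expect_step_def transient_def, simp add: expect_step_empty transient_def)
qed

lemma funpow_transient_ind_antimono:
  assumes "S \<subseteq> V" "k \<le> n"
  shows "(expect_step ^^ n) transient_ind S \<le> (expect_step ^^ k) transient_ind S"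
proof (rule lift_Suc_antimono_le[OF _ assms(2)])
  show "(expect_step ^^ Suc m) transient_ind S \<le> (expect_step ^^ m) transient_ind S" for m
    using assms(1)
  proof (induction m arbitrary: S)
    case 0
    then show ?case by (simp add: expect_step_transient_ind_le)
  next
    case (Suc m)
    have "expect_step ((expect_step ^^ Suc m) transient_ind) S
        \<le> expect_step ((expect_step ^^ m) transient_ind) S"
      by (rule expect_step_mono[OF Suc.IH Suc.prems])
    then show ?case by simp
  qed
qed

lemma funpow_potential_sq_ge:
  "S \<subseteq> V \<Longrightarrow> (\<Phi> S)\<^sup>2 + min_variance * (\<Sum>k<n. (expect_step ^^ k) transient_ind S)
    \<le> (expect_step ^^ n) (\<lambda>S. (\<Phi> S)\<^sup>2) S"
proof (induction n arbitrary: S)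
  case 0
  then show ?case by simp
next
  case (Suc n)
  have "expect_step (\<lambda>S. (\<Phi> S)\<^sup>2 + min_variance * (\<Sum>k<n. (expect_step ^^ k) transient_ind S)) S
      \<le> expect_step ((expect_step ^^ n) (\<lambda>S. (\<Phi> S)\<^sup>2)) S"
    by (rule expect_step_mono[OF Suc.IH Suc.prems])
  moreover have "expect_step (\<lambda>S. (\<Phi> S)\<^sup>2 + min_variance * (\<Sum>k<n. (expect_step ^^ k) transient_ind S)) S
      = expect_step (\<lambda>S. (\<Phi> S)\<^sup>2) S + min_variance * (\<Sum>k<n. (expect_step ^^ Suc k) transient_ind S)"
    by (simp add: expect_step_add expect_step_cmult expect_step_sum)
  moreover have "(\<Sum>k<Suc n. (expect_step ^^ k) transient_ind S)
      = transient_ind S + (\<Sum>k<n. (expect_step ^^ Suc k) transient_ind S)"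
    by (subst sum.lessThan_Suc_shift) simp
  ultimately show ?case
    using potential_sq_le_expect_step[OF Suc.prems] by (simp add: algebra_simps)
qed

lemma funpow_transient_ind_bound:
  assumes "S \<subseteq> V"
  shows "real n * min_variance * (expect_step ^^ n) transient_ind S \<le> 1"
proof -
  have "real n * (expect_step ^^ n) transient_ind S = (\<Sum>k<n. (expect_step ^^ n) transient_ind S)"
    by simp
  also have "\<dots> \<le> (\<Sum>k<n. (expect_step ^^ k) transient_ind S)"
    by (intro sum_mono funpow_transient_ind_antimono assms) simp
  finally have "real n * min_variance * (expect_step ^^ n) transient_ind S
      \<le> min_variance * (\<Sum>k<n. (expect_step ^^ k) transient_ind S)"
    using min_variance_pos by (simp add: mult_left_mono mult.assoc mult.left_commute)
  also have "\<dots> \<le> (expect_step ^^ n) (\<lambda>S. (\<Phi> S)\<^sup>2) S"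
    using funpow_potential_sq_ge[OF assms, of n] zero_le_power2[of "\<Phi> S"] by linarith
  also have "\<dots> \<le> 1"
    using assms potential_nonneg potential_le_1
    by (intro funpow_expect_step_le_1) (simp_all add: power_le_one)
  finally show ?thesis .
qed

lemma funpow_potential_ge: "S \<subseteq> V \<Longrightarrow> \<Phi> S \<le> (expect_step ^^ n) \<Phi> S"
proof (induction n arbitrary: S)
  case 0
  then show ?case by simp
next
  case (Suc n)
  have "expect_step \<Phi> S \<le> expect_step ((expect_step ^^ n) \<Phi>) S"
    by (rule expect_step_mono[OF Suc.IH Suc.prems])
  then show ?case using potential_le_expect_step[OF Suc.prems] by simp
qed

lemma reach_within_ge:
  assumes "S \<subseteq> V"
  shows "\<Phi> S - (expect_step ^^ n) transient_ind S \<le> reach_within p r V w n S"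
proof -
  have "\<Phi> S' \<le> of_bool (S' = V) + transient_ind S'" if "S' \<subseteq> V" for S'
    using that potential_le_1[OF that] weight_sum by (auto simp: transient_def)
  then have "(expect_step ^^ n) \<Phi> S
      \<le> (expect_step ^^ n) (\<lambda>S. of_bool (S = V) + transient_ind S) S"
    by (rule funpow_expect_step_mono[OF _ assms])
  then show ?thesis
    using funpow_potential_ge[OF assms, of n]
    by (simp add: funpow_expect_step_add reach_within_eq_funpow)
qed

lemma potential_le_fixation:
  assumes "S \<subseteq> V"
  shows "\<Phi> S \<le> (SUP n. reach_within p r V w n S)"
proof (rule field_le_epsilon)
  fix e :: real
  assume "0 < e"
  then obtain n where n: "1 < real n * (min_variance * e)"
    using ex_less_of_nat_mult min_variance_pos mult_pos_pos by blast
  have "(expect_step ^^ n) transient_ind S < e"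
  proof (rule ccontr)
    assume "\<not> (expect_step ^^ n) transient_ind S < e"
    then have "real n * min_variance * e \<le> real n * min_variance * (expect_step ^^ n) transient_ind S"
      using min_variance_pos by (intro mult_left_mono) auto
    then show False
      using n funpow_transient_ind_bound[OF assms, of n] by (simp add: mult.assoc)
  qed
  moreover have "bdd_above (range (\<lambda>n. reach_within p r V w n S))"
    using assms by (intro bdd_aboveI[of _ 1]) (auto simp: reach_within_eq_funpow funpow_expect_step_le_1)
  ultimately show "\<Phi> S \<le> (SUP n. reach_within p r V w n S) + e"
    using reach_within_ge[OF assms, of n] cSUP_upper[of n UNIV] by fastforce
qed

lemma exists_fixation_prob_ge: "\<exists>v\<in>V. 1 / real (card V) \<le> fixation_prob p r V w v"
proof -
  have "\<exists>v\<in>V. 1 / real (card V) \<le> \<pi> v"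
  proof (rule ccontr)
    assume "\<not> ?thesis"
    then have "sum \<pi> V < (\<Sum>v\<in>V. 1 / real (card V))"
      using finite_V V_nonempty by (intro sum_strict_mono) auto
    then show False using weight_sum two_le_card by simp
  qed
  moreover have "\<pi> v \<le> fixation_prob p r V w v" if "v \<in> V" for v
    using potential_le_fixation[of "{v}"] that by (simp add: fixation_prob_def)
  ultimately show ?thesis by force
qed

end

text \<open>For \<open>r = 1\<close> these are the fixation probabilities of a single neutral mutant.\<close>
fun potential_weight :: "process \<Rightarrow> 'v set \<Rightarrow> ('v \<Rightarrow> 'v \<Rightarrow> real) \<Rightarrow> 'v \<Rightarrow> real" where
  "potential_weight Bd V w x = (1 / wdeg V w x) / (\<Sum>y\<in>V. 1 / wdeg V w y)"
| "potential_weight dB V w x = wdeg V w x / (\<Sum>y\<in>V. wdeg V w y)"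

context moran_graph
begin

lemma potential_weight_pos:
  assumes "x \<in> V"
  shows "0 < potential_weight q V w x"
proof -
  have "0 < (\<Sum>y\<in>V. 1 / wdeg V w y)" "0 < (\<Sum>y\<in>V. wdeg V w y)"
    using finite_V V_nonempty wdeg_pos by (auto intro!: sum_pos)
  then show ?thesis using wdeg_pos[OF assms] by (cases q) simp_all
qed

lemma potential_weight_sum: "sum (potential_weight q V w) V = 1"
proof -
  have "0 < (\<Sum>y\<in>V. 1 / wdeg V w y)" "0 < (\<Sum>y\<in>V. wdeg V w y)"
    using finite_V V_nonempty wdeg_pos by (auto intro!: sum_pos)
  then have "sum (potential_weight Bd V w) V = 1" "sum (potential_weight dB V w) V = 1"
    unfolding potential_weight.simps sum_divide_distrib[symmetric] by simp_all
  then show ?thesis by (cases q) simp_all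
qed

lemma wdeg_eq_sum_in: "v \<in> V \<Longrightarrow> wdeg V w v = (\<Sum>u\<in>V. w u v)"
  unfolding wdeg_def using w_sym by (intro sum.cong) auto

lemma wdeg_le_weighted_fitness:
  assumes "v \<in> V"
  shows "wdeg V w v \<le> (\<Sum>x\<in>V. fitness r S x * w x v)"
proof -
  have "w x v \<le> fitness r S x * w x v" if "x \<in> V" for x
    using mult_right_mono[OF _ w_nonneg[OF that assms], of 1 "fitness r S x"] r_ge_1
    by (simp add: fitness_def)
  then show ?thesis using assms by (simp add: wdeg_eq_sum_in sum_mono)
qed

lemma weighted_fitness_le:
  assumes "v \<in> V"
  shows "(\<Sum>x\<in>V. fitness r S x * w x v) \<le> r * wdeg V w v"
proof -
  have "fitness r S x * w x v \<le> r * w x v" if "x \<in> V" for x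
    using mult_right_mono[OF _ w_nonneg[OF that assms], of "fitness r S x" r] r_ge_1
    by (simp add: fitness_def)
  then show ?thesis using assms by (simp add: wdeg_eq_sum_in sum_distrib_left sum_mono)
qed

lemma drift_potential_weight_Bd:
  assumes "p = Bd" "S \<subseteq> V"
  shows "0 \<le> drift (sum (potential_weight p V w)) S"
proof -
  define F where "F = (\<Sum>x\<in>V. fitness r S x)"
  define Z where "Z = (\<Sum>y\<in>V. 1 / wdeg V w y)"
  define X where "X u v = w u v / (wdeg V w u * wdeg V w v * Z * F)" for u v
  have "0 < Z" using finite_V V_nonempty wdeg_pos by (auto simp: Z_def intro!: sum_pos)
  have "0 < F" using total_fitness_pos by (simp add: F_def)
  have flow: "ep S u v * potential_weight p V w v = fitness r S u * X u v"
    if "u \<in> V" "v \<in> V" for u v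
    using assms(1) wdeg_pos[OF that(1)] wdeg_pos[OF that(2)] \<open>0 < Z\<close> \<open>0 < F\<close>
    by (simp add: event_prob_def X_def F_def[symmetric] Z_def[symmetric])
  define C where "C = (\<Sum>u\<in>S. \<Sum>v\<in>V - S. X u v)"
  have "0 \<le> C"
    using assms \<open>0 < Z\<close> \<open>0 < F\<close> wdeg_pos w_nonneg
    by (auto simp: C_def X_def intro!: sum_nonneg divide_nonneg_pos)
  have "(\<Sum>u\<in>V - S. \<Sum>v\<in>S. X u v) = C"
    unfolding C_def using assms(2) w_sym by (intro sum_swap_symmetric) (auto simp: X_def mult_ac)
  moreover have "drift (sum (potential_weight p V w)) S
      = (\<Sum>u\<in>S. \<Sum>v\<in>V - S. r * X u v) - (\<Sum>u\<in>V - S. \<Sum>v\<in>S. X u v)"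
    using assms(2) unfolding drift_potential[OF assms(2)]
    by (intro arg_cong2[of _ _ _ _ "(-)"] sum.cong refl)
      (auto simp: flow fitness_def)
  ultimately have "drift (sum (potential_weight p V w)) S = r * C - C"
    by (simp add: C_def sum_distrib_left)
  then show ?thesis using mult_right_mono[OF r_ge_1 \<open>0 \<le> C\<close>] by simp
qed

lemma flow_into_potential_weight_dB:
  assumes "p = dB" "v \<in> V"
  shows "(\<Sum>u\<in>A. ep S u v * potential_weight p V w v)
    = (\<Sum>u\<in>A. fitness r S u * w u v) * (wdeg V w v / (\<Sum>x\<in>V. fitness r S x * w x v))
        / (real (card V) * (\<Sum>y\<in>V. wdeg V w y))"
proof -
  have "ep S u v * potential_weight p V w v
      = fitness r S u * w u v * (wdeg V w v / (\<Sum>x\<in>V. fitness r S x * w x v))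
        / (real (card V) * (\<Sum>y\<in>V. wdeg V w y))" for u
    using assms(1) by (simp add: event_prob_def)
  then show ?thesis
    by (simp only: sum_divide_distrib[symmetric] sum_distrib_right[symmetric])
qed

lemma drift_potential_weight_dB:
  assumes "p = dB" "S \<subseteq> V"
  shows "0 \<le> drift (sum (potential_weight p V w)) S"
proof -
  define \<pi> where "\<pi> = potential_weight p V w"
  define NZ where "NZ = real (card V) * (\<Sum>y\<in>V. wdeg V w y)"
  define q where "q v = wdeg V w v / (\<Sum>x\<in>V. fitness r S x * w x v)" for v
  have "0 < NZ"
    using two_le_card finite_V V_nonempty wdeg_pos by (auto simp: NZ_def intro!: mult_pos_pos sum_pos)
  have gain: "(\<Sum>u\<in>S. w u v) / NZ \<le> (\<Sum>u\<in>S. ep S u v * \<pi> v)" if "v \<in> V" for v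
  proof -
    have "1 \<le> r * q v"
      using weighted_fitness_le[OF that, of S] weighted_fitness_pos[OF that, of S]
      by (simp add: q_def field_simps)
    moreover have "0 \<le> (\<Sum>u\<in>S. w u v)"
      using assms(2) that w_nonneg by (intro sum_nonneg) auto
    ultimately have "(\<Sum>u\<in>S. w u v) \<le> r * (\<Sum>u\<in>S. w u v) * q v"
      using mult_left_mono[of 1 "r * q v" "\<Sum>u\<in>S. w u v"] by (simp add: mult_ac)
    moreover have "(\<Sum>u\<in>S. fitness r S u * w u v) = r * (\<Sum>u\<in>S. w u v)"
      by (auto simp: fitness_def sum_distrib_left intro!: sum.cong)
    ultimately show ?thesis
      unfolding \<pi>_def flow_into_potential_weight_dB[OF assms(1) that] using \<open>0 < NZ\<close>
      by (simp add: q_def[symmetric] NZ_def[symmetric] divide_right_mono)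
  qed
  have loss: "(\<Sum>u\<in>V - S. ep S u v * \<pi> v) \<le> (\<Sum>u\<in>V - S. w u v) / NZ" if "v \<in> V" for v
  proof -
    have "q v \<le> 1"
      using wdeg_le_weighted_fitness[OF that, of S] weighted_fitness_pos[OF that, of S]
      by (simp add: q_def)
    moreover have "0 \<le> (\<Sum>u\<in>V - S. w u v)"
      using that w_nonneg by (intro sum_nonneg) auto
    ultimately have "(\<Sum>u\<in>V - S. w u v) * q v \<le> (\<Sum>u\<in>V - S. w u v)"
      using mult_left_mono[of "q v" 1] by simp
    moreover have "(\<Sum>u\<in>V - S. fitness r S u * w u v) = (\<Sum>u\<in>V - S. w u v)"
      by (auto simp: fitness_def intro!: sum.cong)
    ultimately show ?thesis
      unfolding \<pi>_def flow_into_potential_weight_dB[OF assms(1) that] using \<open>0 < NZ\<close>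
      by (simp add: q_def[symmetric] NZ_def[symmetric] divide_right_mono)
  qed
  have "(\<Sum>v\<in>V - S. \<Sum>u\<in>S. w u v) = (\<Sum>v\<in>S. \<Sum>u\<in>V - S. w u v)"
    using assms(2) w_sym by (intro sum_swap_symmetric) auto
  then have "0 = (\<Sum>v\<in>V - S. (\<Sum>u\<in>S. w u v) / NZ) - (\<Sum>v\<in>S. (\<Sum>u\<in>V - S. w u v) / NZ)"
    by (simp flip: sum_divide_distrib)
  also have "\<dots> \<le> (\<Sum>v\<in>V - S. \<Sum>u\<in>S. ep S u v * \<pi> v) - (\<Sum>v\<in>S. \<Sum>u\<in>V - S. ep S u v * \<pi> v)"
    using assms(2) gain loss by (intro diff_mono sum_mono) auto
  also have "\<dots> = drift (sum \<pi>) S"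
    unfolding drift_potential[OF assms(2)] by (subst (1 2) sum.swap) (rule refl)
  finally show ?thesis by (simp add: \<pi>_def)
qed

lemma drift_potential_weight_nonneg: "S \<subseteq> V \<Longrightarrow> 0 \<le> drift (sum (potential_weight p V w)) S"
  using drift_potential_weight_Bd drift_potential_weight_dB by (cases p) blast+

end

theorem mainTheorem6:
  fixes V :: "'v set" and w :: "'v \<Rightarrow> 'v \<Rightarrow> real" and r :: real and p :: process
  assumes "weighted_graph V w"
    and "connected_wgraph V w"
    and "r \<ge> 1"
  shows "\<exists>v\<in>V. fixation_prob p r V w v \<ge> 1 / real (card V)"
proof (cases "card V = 1")
  case True
  then obtain v where V: "V = {v}" by (auto simp: card_1_singleton_iff)
  then have "reach_within p r V w n {v} = 1" for n by (cases n) auto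
  then show ?thesis using V by (simp add: fixation_prob_def)
next
  case False
  moreover have "card V \<noteq> 0" using assms(1) by (simp add: weighted_graph_def)
  ultimately interpret moran_graph p r V w
    using assms by unfold_locales simp_all
  interpret potential_submartingale p r V w "potential_weight p V w"
    by unfold_locales (simp_all add: potential_weight_pos potential_weight_sum drift_potential_weight_nonneg)
  show ?thesis by (rule exists_fixation_prob_ge)
qed

end
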